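(* Let $n\ge1$, $V=\{0,1\}^n$, $\mu$ uniform on $V$, $\beta=\log_2(3/2)$, and let $(R,S,U)$ be a partition of $V$ with $\mu(R\cup U)=\alpha$. Then \[ 2^{-n}|\nabla(R,S)|=\int_R h_{R\cup U}\,d\mu\;\ge\;\int_R h_{R\cup U}^\beta\,d\mu\;\ge\;2\alpha(1-\alpha)-n^\beta\mu(U). \]
   Context: $V=\{0,1\}^n$ is the vertex set of the Hamming cube $Q_n$. $d_T(x)$ is the number of neighbors of $x$ in $T$; $h_S(x)=d_{V\setminus S}(x)$ for $x\in S$ and $h_S(x)=0$ otherwise. $\int_X F\,d\mu=\sum_{x\in X}F(x)\mu(x)$. $\nabla(R,S)$ is the set of adjacent pairs $(x,y)$ with $x\in R$, $y\in S$. *)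

theory Defs
  imports Complex_Main
begin

definition cube :: "nat \<Rightarrow> bool list set" where
  "cube n = {xs. length xs = n}"

definition cube_adj :: "bool list \<Rightarrow> bool list \<Rightarrow> bool" where
  "cube_adj x y \<longleftrightarrow> length x = length y \<and> card {i. i < length x \<and> x ! i \<noteq> y ! i} = 1"

definition deg_in :: "bool list set \<Rightarrow> bool list \<Rightarrow> nat" where
  "deg_in T x = card {y \<in> T. cube_adj x y}"

definition hfun :: "nat \<Rightarrow> bool list set \<Rightarrow> bool list \<Rightarrow> nat" where
  "hfun n S x = (if x \<in> S then deg_in (cube n - S) x else 0)"

definition nabla :: "bool list set \<Rightarrow> bool list set \<Rightarrow> (bool list \<times> bool list) set" where
  "nabla R S = {(x, y). x \<in> R \<and> y \<in> S \<and> cube_adj x y}"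

definition mu :: "nat \<Rightarrow> bool list set \<Rightarrow> real" where
  "mu n X = real (card X) / 2 ^ n"

definition cube_int :: "nat \<Rightarrow> bool list set \<Rightarrow> (bool list \<Rightarrow> real) \<Rightarrow> real" where
  "cube_int n X F = (\<Sum>x\<in>X. F x * mu n {x})"

end

theory Submission
  imports Defs "HOL-Analysis.Convex"
begin

text \<open>
  The heart of the matter is the Kahn--Park inequality
  \<Sum>x\<in>A. h_A(x)^\<beta> \<ge> 2 |A| (2^n - |A|) / 2^n  for every A \<subseteq> Q_n,
  proved by induction on n. Splitting Q_{n+1} along the first coordinate gives two slices
  A0, A1 of A; replacing them by A0 \<union> A1 and A0 \<inter> A1 can only decrease the left-hand side,
  because h \<mapsto> h^\<beta> is concave and the degrees into the complements of the union and the
  intersection add up to those into the complements of the slices. The induction hypothesis for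
  the union and the intersection then leaves a one-variable inequality, which follows from an
  affine minorant p - q h^\<beta> of the increments (h+1)^\<beta> - h^\<beta>, chosen according to the
  densities of the union and the intersection; 2^\<beta> = 3/2 enters through the values at h = 2, 4.
  The corollary applies the inequality to R \<union> U, charging each vertex of U at most n^\<beta>,
  and uses h^\<beta> \<le> h on the naturals for the middle inequality.
\<close>

lemma concave_on_powr:
  assumes "0 \<le> p" "p \<le> 1"
  shows "concave_on {0<..} (\<lambda>x::real. x powr p)"
proof (rule f''_le0_imp_concave[where f'="\<lambda>x. p * x powr (p - 1)" and f''="\<lambda>x. p * ((p - 1) * x powr (p - 1 - 1))"])
  fix x :: real assume "x \<in> {0<..}"
  hence x: "x > 0" by simp
  show "((\<lambda>x. x powr p) has_real_derivative p * x powr (p - 1)) (at x)"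
    using has_real_derivative_powr[OF x] .
  show "((\<lambda>x. p * x powr (p - 1)) has_real_derivative p * ((p - 1) * x powr (p - 1 - 1))) (at x)"
    by (intro DERIV_cmult has_real_derivative_powr x)
  show "p * ((p - 1) * x powr (p - 1 - 1)) \<le> 0"
    using assms by (intro mult_nonneg_nonpos mult_nonpos_nonneg) auto
qed auto

lemma concave_on_slope_le:
  fixes f :: "real \<Rightarrow> real"
  assumes f: "concave_on I f" and I: "x \<in> I" "y \<in> I" and t: "x < t" "t < y"
  shows "(f y - f x) / (y - x) \<le> (f t - f x) / (t - x)"
    and "(f y - f t) / (y - t) \<le> (f y - f x) / (y - x)"
proof -
  have "convex_on I (\<lambda>x. - f x)" using f by (simp add: concave_on_def)
  note s = convex_on_slope_le[OF this I t]
  have flip: "(- f u - - f v) / (u - v) = - ((f v - f u) / (v - u))" for u v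
    by (simp add: field_split_simps)
  show "(f y - f x) / (y - x) \<le> (f t - f x) / (t - x)"
    using s(1) unfolding flip by simp
  show "(f y - f t) / (y - t) \<le> (f y - f x) / (y - x)"
    using s(2) unfolding flip by simp
qed

definition cube_exponent :: real where "cube_exponent = log 2 (3/2)"

lemma two_powr_cube_exponent: "2 powr cube_exponent = 3/2"
  unfolding cube_exponent_def by simp

lemma cube_exponent_gt_half: "cube_exponent > 1/2"
proof -
  have "2 powr (1/2) = sqrt (2::real)" by (simp add: powr_half_sqrt)
  also have "\<dots> < 2 powr cube_exponent"
    unfolding two_powr_cube_exponent by (rule real_less_lsqrt) (auto simp: power2_eq_square)
  finally show ?thesis by simp
qed

lemma cube_exponent_lt_1: "cube_exponent < 1"
proof -
  have "(2::real) powr cube_exponent < 2 powr 1" using two_powr_cube_exponent by simp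
  thus ?thesis by (subst (asm) powr_less_cancel_iff) auto
qed

definition hpow :: "nat \<Rightarrow> real" where "hpow h = real h powr cube_exponent"

definition hpow_step :: "nat \<Rightarrow> real" where "hpow_step h = hpow (Suc h) - hpow h"

lemma hpow_nonneg: "hpow h \<ge> 0" by (simp add: hpow_def)
lemma hpow_0 [simp]: "hpow 0 = 0" by (simp add: hpow_def)
lemma hpow_Suc_0 [simp]: "hpow (Suc 0) = 1" by (simp add: hpow_def)
lemma hpow_Suc: "hpow (Suc h) = hpow h + hpow_step h" by (simp add: hpow_step_def)

lemma hpow_mono: "h \<le> k \<Longrightarrow> hpow h \<le> hpow k"
  unfolding hpow_def using cube_exponent_gt_half by (intro powr_mono2) auto

lemma hpow_le_self: "hpow h \<le> real h"
proof (cases "h = 0")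
  case False
  hence "real h powr cube_exponent \<le> real h powr 1"
    using cube_exponent_lt_1 by (intro powr_mono) auto
  thus ?thesis using False by (simp add: hpow_def)
qed simp

lemma hpow_double: "hpow (2 * h) = 3/2 * hpow h"
  unfolding hpow_def by (simp add: powr_mult two_powr_cube_exponent)

lemma hpow_2 [simp]: "hpow 2 = 3/2" using hpow_double[of 1] by simp
lemma hpow_4 [simp]: "hpow 4 = 9/4" using hpow_double[of 2] by simp

lemma hpow_step_nonneg: "hpow_step h \<ge> 0"
  unfolding hpow_step_def using hpow_mono[of h "Suc h"] by simp

lemma hpow_step_0 [simp]: "hpow_step 0 = 1" by (simp add: hpow_step_def)
lemma hpow_step_Suc_0 [simp]: "hpow_step (Suc 0) = 1/2"
  by (simp add: hpow_step_def numeral_2_eq_2[symmetric])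

lemma powr_cube_exponent_slope_le:
  assumes "0 < x" "x < t" "t < y"
  shows "(y powr cube_exponent - x powr cube_exponent) / (y - x) \<le> (t powr cube_exponent - x powr cube_exponent) / (t - x)"
    and "(y powr cube_exponent - t powr cube_exponent) / (y - t) \<le> (y powr cube_exponent - x powr cube_exponent) / (y - x)"
  using concave_on_slope_le[OF concave_on_powr _ _ assms(2,3)] assms cube_exponent_gt_half cube_exponent_lt_1
  by auto

lemma hpow_step_Suc_le: "hpow_step (Suc h) \<le> hpow_step h"
proof (cases "h = 0")
  case False
  hence "0 < real h" by simp
  note slope = powr_cube_exponent_slope_le(2)[OF this, of "real h + 1" "real h + 2"]
  have "hpow_step (Suc h) = ((real h + 2) powr cube_exponent - (real h + 1) powr cube_exponent) / ((real h + 2) - (real h + 1))"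
    by (simp add: hpow_step_def hpow_def add_ac)
  also have "\<dots> \<le> ((real h + 1) powr cube_exponent - real h powr cube_exponent) / ((real h + 1) - real h)"
    using slope powr_cube_exponent_slope_le(1)[OF \<open>0 < real h\<close>, of "real h + 1" "real h + 2"] by linarith
  also have "\<dots> = hpow_step h" by (simp add: hpow_step_def hpow_def add_ac)
  finally show ?thesis .
qed simp

lemma hpow_step_antimono: "i \<le> j \<Longrightarrow> hpow_step j \<le> hpow_step i"
proof (induction j rule: dec_induct)
  case (step j) thus ?case using hpow_step_Suc_le[of j] by linarith
qed simp

lemma hpow_increment_antimono: "m \<le> b \<Longrightarrow> hpow (b + k) - hpow b \<le> hpow (m + k) - hpow m"
proof (induction k)
  case (Suc k)
  have "hpow_step (b + k) \<le> hpow_step (m + k)" using Suc.prems by (intro hpow_step_antimono) simp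
  thus ?case using Suc by (simp add: hpow_step_def)
qed simp

lemma hpow_add_le:
  assumes "hC \<le> h0" "hC \<le> h1" "hD + hC = h0 + h1"
  shows "hpow hD + hpow hC \<le> hpow h0 + hpow h1"
proof -
  have "hpow (h1 + (h0 - hC)) - hpow h1 \<le> hpow (hC + (h0 - hC)) - hpow hC"
    using assms by (intro hpow_increment_antimono) simp
  moreover have "h1 + (h0 - hC) = hD" "hC + (h0 - hC) = h0" using assms by auto
  ultimately show ?thesis by simp
qed

lemma hpow_step_ge: "h \<ge> 1 \<Longrightarrow> hpow h / (2 * real h) \<le> hpow_step h"
proof (cases "h = 1")
  case False
  assume "h \<ge> 1"
  hence p: "0 < real h" "real h < real h + 1" "real h + 1 < 2 * real h" using False by auto
  have "hpow h / (2 * real h) = ((2 * real h) powr cube_exponent - real h powr cube_exponent) / (2 * real h - real h)"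
    using hpow_double[of h] p(1) by (simp add: hpow_def field_simps)
  also have "\<dots> \<le> ((real h + 1) powr cube_exponent - real h powr cube_exponent) / ((real h + 1) - real h)"
    using powr_cube_exponent_slope_le(1)[OF p] .
  also have "\<dots> = hpow_step h" by (simp add: hpow_step_def hpow_def add_ac)
  finally show ?thesis .
qed simp

lemma hpow_step_ge_big_line: "1 - hpow h / 2 \<le> hpow_step h"
proof -
  consider "h \<le> 1" | "h = 2 \<or> h = 3" | "h \<ge> 4" by linarith
  thus ?thesis
  proof cases
    case 1 thus ?thesis by (cases h) auto
  next
    case 2
    hence "hpow h \<ge> 3/2" using hpow_mono[of 2 h] by auto
    moreover have "1 / (2 * real h) + 1/2 \<ge> 2/3" using 2 by auto
    ultimately have "3/2 * (2/3) \<le> hpow h * (1 / (2 * real h) + 1/2)"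
      by (intro mult_mono) auto
    moreover have "hpow h / (2 * real h) \<le> hpow_step h" using 2 by (intro hpow_step_ge) auto
    ultimately show ?thesis by (simp add: algebra_simps)
  next
    case 3
    hence "hpow h \<ge> 9/4" using hpow_mono[of 4 h] by auto
    thus ?thesis using hpow_step_nonneg[of h] by linarith
  qed
qed

lemma hpow_step_ge_small_line:
  fixes t :: real
  assumes t: "0 < t" "t < 1/2"
  shows "t / cube_exponent - (2 * t^2 * (1 - cube_exponent) / cube_exponent) * hpow h \<le> hpow_step h"
proof (cases "h = 0")
  case True
  have "t / cube_exponent \<le> 1" using t cube_exponent_gt_half by (simp add: divide_simps)
  thus ?thesis using True by simp
next
  case False
  let ?\<beta> = cube_exponent
  let ?X = "(2 * t^2 * (1 - ?\<beta>) / ?\<beta>) * hpow h + hpow h / (2 * real h)"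
  have hp: "real h > 0" using False by simp
  define a where "a = 2 * t"
  define b where "b = 1 / (2 * t * real h)"
  have a: "0 < a" "a \<le> 1" using t by (auto simp: a_def)
  have b: "0 < b" using t hp by (simp add: b_def)
  have "b * real h = 1 / a" using t hp by (simp add: a_def b_def)
  hence hb: "hpow h * b powr ?\<beta> = 1 / a powr ?\<beta>"
    by (simp add: hpow_def powr_mult[symmetric] mult.commute powr_divide)
  have "a powr ?\<beta> \<le> a powr (1 - ?\<beta>)" using a cube_exponent_gt_half by (intro powr_mono') auto
  hence "1 \<le> a powr (1 - ?\<beta>) * (1 / a powr ?\<beta>)" using a by (simp add: divide_simps)
  also have "\<dots> = hpow h * (a powr (1 - ?\<beta>) * b powr ?\<beta>)" by (metis hb mult.left_commute)
  also have "\<dots> \<le> hpow h * ((1 - ?\<beta>) * a + ?\<beta> * b)"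
    using cube_exponent_gt_half cube_exponent_lt_1 a b hpow_nonneg
    by (intro mult_left_mono Youngs_inequality_0) auto
  also have "\<dots> = (?\<beta> / t) * ?X"
    using t hp cube_exponent_gt_half by (simp add: a_def b_def field_simps power2_eq_square)
  finally have "t / ?\<beta> * 1 \<le> t / ?\<beta> * ((?\<beta> / t) * ?X)"
    using t cube_exponent_gt_half by (intro mult_left_mono) auto
  hence "t / ?\<beta> \<le> ?X" using t cube_exponent_gt_half by simp
  thus ?thesis using hpow_step_ge[of h] False by linarith
qed

lemma hpow_step_affine_minorant:
  fixes c d :: real
  assumes "0 \<le> d" "d \<le> c" "c \<le> 1"
  obtains p q where "0 \<le> q" "q \<le> 1" "\<And>h. p - q * hpow h \<le> hpow_step h"
    and "p * (c - d) - (c - d)^2 - 2 * q * c * (1 - c) \<ge> 0"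
proof -
  define t where "t = c - d"
  consider "t = 0" | "0 < t" "t < 1/2" | "t \<ge> 1/2" using assms t_def by linarith
  thus ?thesis
  proof cases
    case 1
    show ?thesis by (rule that[of 0 0]) (use 1 t_def hpow_step_nonneg in auto)
  next
    case 2
    let ?\<beta> = cube_exponent
    define q where "q = 2 * t^2 * (1 - ?\<beta>) / ?\<beta>"
    have q0: "0 \<le> q" using cube_exponent_gt_half cube_exponent_lt_1 by (simp add: q_def)
    have "t^2 \<le> 1/4" using 2 power_strict_mono[of t "1/2" 2] by (simp add: power2_eq_square)
    moreover have "(1 - ?\<beta>) / ?\<beta> \<le> 1" using cube_exponent_gt_half by (simp add: divide_simps)
    ultimately have "2 * t^2 * ((1 - ?\<beta>) / ?\<beta>) \<le> 2 * (1/4) * 1"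
      using cube_exponent_gt_half cube_exponent_lt_1 by (intro mult_mono) auto
    hence q1: "q \<le> 1" by (simp add: q_def)
    have "c * (1 - c) \<le> 1/4" using zero_le_power2[of "c - 1/2"] by (simp add: power2_eq_square algebra_simps)
    hence "2 * q * c * (1 - c) \<le> q / 2" using q0 mult_left_mono[of "c * (1 - c)" "1/4" "2 * q"]
      by (simp add: mult.assoc)
    moreover have "(t / ?\<beta>) * t - t^2 = q / 2"
      using cube_exponent_gt_half by (simp add: q_def field_simps power2_eq_square)
    ultimately show ?thesis using q0 q1 hpow_step_ge_small_line[of t] 2
      by (intro that[of q "t / ?\<beta>"]) (auto simp: q_def t_def)
  next
    case 3
    have "t * (1 - t) - c * (1 - c) = (c - t) * (c + t - 1)" by (simp add: algebra_simps)
    moreover have "(c - t) * (c + t - 1) \<ge> 0" using 3 assms t_def by (intro mult_nonneg_nonneg) auto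
    ultimately show ?thesis using hpow_step_ge_big_line
      by (intro that[of "1/2" 1]) (auto simp: t_def power2_eq_square algebra_simps)
  qed
qed

lemma density_recursion_ineq:
  fixes c d sC sD w p q :: real
  assumes "0 \<le> q" "q \<le> 1" "2 * c * (1 - c) \<le> sC" "2 * d * (1 - d) \<le> sD"
    and "p * (c - d) - q * sC \<le> w" "p * (c - d) - (c - d)^2 - 2 * q * c * (1 - c) \<ge> 0"
  shows "(c + d) * (2 - c - d) \<le> sC + sD + w"
proof -
  have "(1 - q) * (2 * c * (1 - c)) \<le> (1 - q) * sC"
    using assms by (intro mult_left_mono) auto
  moreover have "(c + d) * (2 - c - d) = (1 - q) * (2 * c * (1 - c)) + 2 * d * (1 - d) + p * (c - d)
      - (p * (c - d) - (c - d)^2 - 2 * q * c * (1 - c))"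
    by (simp add: algebra_simps power2_eq_square)
  ultimately show ?thesis using assms by (simp add: algebra_simps)
qed

lemma hpow_recursion_step:
  fixes f :: "'a \<Rightarrow> nat" and K SD :: real
  assumes fin: "finite C" and DC: "D \<subseteq> C" and K: "K > 0" "real (card C) \<le> K"
    and IHC: "2 * real (card C) * (K - real (card C)) / K \<le> (\<Sum>x\<in>C. hpow (f x))"
    and IHD: "2 * real (card D) * (K - real (card D)) / K \<le> SD"
  shows "2 * real (card C + card D) * (2 * K - real (card C + card D)) / (2 * K)
    \<le> (\<Sum>x\<in>C. hpow (f x)) + SD + (\<Sum>x\<in>C - D. hpow_step (f x))"
proof -
  define SC where "SC = (\<Sum>x\<in>C. hpow (f x))"
  define W where "W = (\<Sum>x\<in>C - D. hpow_step (f x))"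
  define c where "c = real (card C) / K"
  define d where "d = real (card D) / K"
  have cardDC: "card D \<le> card C" using DC fin by (intro card_mono)
  have cd: "0 \<le> d" "d \<le> c" "c \<le> 1"
    using K cardDC by (auto simp: c_def d_def divide_right_mono)
  obtain p q where q: "0 \<le> q" "q \<le> 1" and line: "\<And>h. p - q * hpow h \<le> hpow_step h"
    and pq: "p * (c - d) - (c - d)^2 - 2 * q * c * (1 - c) \<ge> 0"
    using hpow_step_affine_minorant[OF cd] by blast
  have "(\<Sum>x\<in>C - D. p - q * hpow (f x)) \<le> W"
    unfolding W_def by (rule sum_mono) (rule line)
  hence "p * real (card (C - D)) - q * (\<Sum>x\<in>C - D. hpow (f x)) \<le> W"
    by (simp add: sum_subtractf sum_distrib_left mult.commute)
  moreover have "q * (\<Sum>x\<in>C - D. hpow (f x)) \<le> q * SC"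
    unfolding SC_def by (intro mult_left_mono sum_mono2) (use fin q hpow_nonneg in auto)
  moreover have "real (card (C - D)) = real (card C) - real (card D)"
    using card_Diff_subset[OF finite_subset[OF DC fin] DC] cardDC by simp
  ultimately have "(p * (real (card C) - real (card D)) - q * SC) / K \<le> W / K"
    using K by (intro divide_right_mono) auto
  also have "(p * (real (card C) - real (card D)) - q * SC) / K = p * (c - d) - q * (SC / K)"
    using K by (simp add: c_def d_def field_simps)
  finally have W: "p * (c - d) - q * (SC / K) \<le> W / K" .
  have "2 * c * (1 - c) = (2 * real (card C) * (K - real (card C)) / K) / K"
    "2 * d * (1 - d) = (2 * real (card D) * (K - real (card D)) / K) / K"
    using K by (simp_all add: c_def d_def field_simps)
  moreover have "(2 * real (card C) * (K - real (card C)) / K) / K \<le> SC / K"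
    "(2 * real (card D) * (K - real (card D)) / K) / K \<le> SD / K"
    using IHC IHD K unfolding SC_def by (simp_all only: divide_right_mono less_imp_le)
  ultimately have "(c + d) * (2 - c - d) \<le> SC / K + SD / K + W / K"
    using density_recursion_ineq[OF q _ _ W pq] by simp
  hence "K * ((c + d) * (2 - c - d)) \<le> K * (SC / K + SD / K + W / K)"
    using K by (intro mult_left_mono) auto
  moreover have "K * ((c + d) * (2 - c - d))
      = 2 * real (card C + card D) * (2 * K - real (card C + card D)) / (2 * K)"
    using K by (simp add: c_def d_def field_simps)
  moreover have "K * (SC / K + SD / K + W / K) = SC + SD + W" using K by (simp add: field_simps)
  ultimately show ?thesis unfolding SC_def W_def by (simp only:)
qed

lemma finite_cube: "finite (cube n)"
  and card_cube: "card (cube n) = 2 ^ n"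
proof -
  have "cube n = {xs. set xs \<subseteq> (UNIV::bool set) \<and> length xs = n}" by (auto simp: cube_def)
  thus "finite (cube n)" "card (cube n) = 2 ^ n"
    using finite_lists_length_eq[of "UNIV::bool set" n] card_lists_length_eq[of "UNIV::bool set" n] by simp_all
qed

lemma Cons_in_cube_Suc [simp]: "b # xs \<in> cube (Suc n) \<longleftrightarrow> xs \<in> cube n"
  by (simp add: cube_def)

lemma cube_SucE:
  assumes "y \<in> cube (Suc n)"
  obtains b ys where "y = b # ys" "ys \<in> cube n"
  using assms by (cases y) (auto simp: cube_def)

definition diff_positions :: "bool list \<Rightarrow> bool list \<Rightarrow> nat set" where
  "diff_positions x y = {i. i < length x \<and> x ! i \<noteq> y ! i}"

lemma finite_diff_positions [simp]: "finite (diff_positions x y)"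
  by (simp add: diff_positions_def)

lemma diff_positions_Cons:
  "diff_positions (a # xs) (b # ys) = (if a \<noteq> b then {0} else {}) \<union> Suc ` diff_positions xs ys"
proof -
  have "i \<in> diff_positions (a # xs) (b # ys) \<longleftrightarrow> i \<in> (if a \<noteq> b then {0} else {}) \<union> Suc ` diff_positions xs ys" for i
    by (cases i) (auto simp: diff_positions_def)
  thus ?thesis by blast
qed

lemma card_diff_positions_Cons:
  "card (diff_positions (a # xs) (b # ys)) = (if a \<noteq> b then 1 else 0) + card (diff_positions xs ys)"
  by (simp add: diff_positions_Cons card_image image_iff)

lemma cube_adj_Cons:
  "cube_adj (a # xs) (b # ys) \<longleftrightarrow> (a = b \<and> cube_adj xs ys) \<or> (a \<noteq> b \<and> xs = ys)"
proof -
  have adj: "cube_adj u v \<longleftrightarrow> length u = length v \<and> card (diff_positions u v) = 1" for u v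
    by (simp add: cube_adj_def diff_positions_def)
  have "length xs = length ys \<Longrightarrow> card (diff_positions xs ys) = 0 \<longleftrightarrow> xs = ys"
    by (auto simp: diff_positions_def intro: nth_equalityI)
  thus ?thesis by (auto simp: adj card_diff_positions_Cons)
qed

definition cube_slice :: "bool \<Rightarrow> bool list set \<Rightarrow> bool list set" where
  "cube_slice a A = {xs. a # xs \<in> A}"

lemma cube_slice_subset: "A \<subseteq> cube (Suc n) \<Longrightarrow> cube_slice a A \<subseteq> cube n"
  by (auto simp: cube_slice_def)

lemma deg_in_Cons:
  assumes T: "T \<subseteq> cube (Suc n)"
  shows "deg_in T (a # xs) = (if (\<not> a) # xs \<in> T then 1 else 0) + deg_in (cube_slice a T) xs"
proof -
  have nbrs: "{y \<in> T. cube_adj (a # xs) y}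
      = ({(\<not> a) # xs} \<inter> T) \<union> Cons a ` {ys \<in> cube_slice a T. cube_adj xs ys}"
  proof (intro set_eqI iffI)
    fix y assume y: "y \<in> {y \<in> T. cube_adj (a # xs) y}"
    then obtain b ys where "y = b # ys" using T by (blast elim: cube_SucE)
    thus "y \<in> ({(\<not> a) # xs} \<inter> T) \<union> Cons a ` {ys \<in> cube_slice a T. cube_adj xs ys}"
      using y by (cases "a = b") (auto simp: cube_adj_Cons cube_slice_def)
  qed (auto simp: cube_adj_Cons cube_slice_def)
  have "finite (cube_slice a T)"
    using cube_slice_subset[OF T] finite_cube finite_subset by blast
  hence "card (({(\<not> a) # xs} \<inter> T) \<union> Cons a ` {ys \<in> cube_slice a T. cube_adj xs ys})
      = card ({(\<not> a) # xs} \<inter> T) + card {ys \<in> cube_slice a T. cube_adj xs ys}"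
    by (subst card_Un_disjoint) (auto simp: card_image)
  thus ?thesis unfolding deg_in_def nbrs by auto
qed

lemma hfun_Cons:
  assumes A: "A \<subseteq> cube (Suc n)" and x: "xs \<in> cube_slice a A"
  shows "hfun (Suc n) A (a # xs)
    = (if xs \<in> cube_slice (\<not> a) A then 0 else 1) + deg_in (cube n - cube_slice a A) xs"
proof -
  have "xs \<in> cube n" using A x by (auto simp: cube_slice_def)
  moreover have "cube_slice a (cube (Suc n) - A) = cube n - cube_slice a A"
    by (auto simp: cube_slice_def)
  ultimately show ?thesis
    using x deg_in_Cons[of "cube (Suc n) - A" n a xs] by (simp add: hfun_def cube_slice_def)
qed

lemma sum_cube_Suc:
  assumes A: "A \<subseteq> cube (Suc n)"
  shows "(\<Sum>z\<in>A. F z) = (\<Sum>xs\<in>cube_slice True A. F (True # xs)) + (\<Sum>xs\<in>cube_slice False A. F (False # xs))"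
proof -
  have A_eq: "A = Cons True ` cube_slice True A \<union> Cons False ` cube_slice False A"
  proof (intro set_eqI iffI)
    fix z assume "z \<in> A"
    moreover obtain b ys where "z = b # ys" using A \<open>z \<in> A\<close> by (blast elim: cube_SucE)
    ultimately show "z \<in> Cons True ` cube_slice True A \<union> Cons False ` cube_slice False A"
      by (cases b) (auto simp: cube_slice_def)
  qed (auto simp: cube_slice_def)
  have "finite (cube_slice b A)" for b
    using cube_slice_subset[OF A] finite_cube finite_subset by blast
  hence "(\<Sum>z\<in>A. F z) = (\<Sum>z\<in>Cons True ` cube_slice True A. F z) + (\<Sum>z\<in>Cons False ` cube_slice False A. F z)"
    by (subst A_eq, intro sum.union_disjoint) auto
  thus ?thesis by (simp add: sum.reindex)
qed

lemma card_cube_Suc: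
  "A \<subseteq> cube (Suc n) \<Longrightarrow> card A = card (cube_slice True A) + card (cube_slice False A)"
  using sum_cube_Suc[of A n "\<lambda>_. 1::nat"] by simp

lemma deg_in_Un_Int:
  assumes "finite X" "finite Y"
  shows "deg_in (X \<union> Y) x + deg_in (X \<inter> Y) x = deg_in X x + deg_in Y x"
proof -
  have "{y \<in> X \<union> Y. cube_adj x y} = {y \<in> X. cube_adj x y} \<union> {y \<in> Y. cube_adj x y}"
       "{y \<in> X \<inter> Y. cube_adj x y} = {y \<in> X. cube_adj x y} \<inter> {y \<in> Y. cube_adj x y}" by auto
  thus ?thesis
    unfolding deg_in_def using assms card_Un_Int[of "{y \<in> X. cube_adj x y}" "{y \<in> Y. cube_adj x y}"]
    by simp
qed

lemma deg_in_mono: "finite Y \<Longrightarrow> X \<subseteq> Y \<Longrightarrow> deg_in X x \<le> deg_in Y x"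
  unfolding deg_in_def by (rule card_mono) auto

lemma deg_in_le_dim: "T \<subseteq> cube n \<Longrightarrow> x \<in> cube n \<Longrightarrow> deg_in T x \<le> n"
proof (induction n arbitrary: T x)
  case 0
  hence "x = []" by (simp add: cube_def)
  thus ?case by (simp add: deg_in_def cube_adj_def)
next
  case (Suc n T x)
  obtain a xs where x: "x = a # xs" "xs \<in> cube n" using Suc.prems(2) by (blast elim: cube_SucE)
  have "deg_in (cube_slice a T) xs \<le> n" using Suc.IH[OF cube_slice_subset[OF Suc.prems(1)] x(2)] .
  thus ?case using deg_in_Cons[OF Suc.prems(1), of a xs] x by simp
qed

lemma card_nabla: "finite R \<Longrightarrow> card (nabla R S) = (\<Sum>x\<in>R. deg_in S x)"
proof -
  assume "finite R"
  have "{y \<in> S. cube_adj x y} \<subseteq> cube (length x)" for x by (auto simp: cube_def cube_adj_def)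
  hence "finite {y \<in> S. cube_adj x y}" for x using finite_cube finite_subset by blast
  moreover have "nabla R S = Sigma R (\<lambda>x. {y \<in> S. cube_adj x y})" by (auto simp: nabla_def)
  ultimately show ?thesis using \<open>finite R\<close> by (simp add: deg_in_def)
qed

lemma deg_in_compl_Un_Int:
  "deg_in (cube n - (X \<inter> Y)) x + deg_in (cube n - (X \<union> Y)) x = deg_in (cube n - X) x + deg_in (cube n - Y) x"
proof -
  have "cube n - (X \<inter> Y) = (cube n - X) \<union> (cube n - Y)" "cube n - (X \<union> Y) = (cube n - X) \<inter> (cube n - Y)"
    by auto
  thus ?thesis using deg_in_Un_Int[of "cube n - X" "cube n - Y" x] finite_cube by simp
qed

lemma sum_hpow_hfun_Suc:
  assumes A: "A \<subseteq> cube (Suc n)"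
  defines "A0 \<equiv> cube_slice False A" and "A1 \<equiv> cube_slice True A"
  shows "(\<Sum>z\<in>A. hpow (hfun (Suc n) A z))
    = (\<Sum>x\<in>A0. hpow ((if x \<in> A1 then 0 else 1) + deg_in (cube n - A0) x))
      + (\<Sum>x\<in>A1. hpow ((if x \<in> A0 then 0 else 1) + deg_in (cube n - A1) x))"
proof -
  have "(\<Sum>x\<in>cube_slice a A. hpow (hfun (Suc n) A (a # x)))
      = (\<Sum>x\<in>cube_slice a A. hpow ((if x \<in> cube_slice (\<not> a) A then 0 else 1) + deg_in (cube n - cube_slice a A) x))"
    for a by (intro sum.cong refl) (simp add: hfun_Cons[OF A])
  thus ?thesis using sum_cube_Suc[OF A, of "\<lambda>z. hpow (hfun (Suc n) A z)"]
    by (simp add: A0_def A1_def)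
qed

lemma sum_hpow_two_slices:
  fixes X Y :: "'a set" and fX fY fU fI :: "'a \<Rightarrow> nat"
  assumes fin: "finite X" "finite Y"
    and deg: "\<And>x. x \<in> X \<union> Y \<Longrightarrow> fU x \<le> fX x \<and> fU x \<le> fY x \<and> fI x + fU x = fX x + fY x"
  shows "(\<Sum>x\<in>X \<union> Y. hpow (fU x)) + (\<Sum>x\<in>X \<inter> Y. hpow (fI x)) + (\<Sum>x\<in>(X \<union> Y) - (X \<inter> Y). hpow_step (fU x))
    \<le> (\<Sum>x\<in>X. hpow ((if x \<in> Y then 0 else 1) + fX x)) + (\<Sum>x\<in>Y. hpow ((if x \<in> X then 0 else 1) + fY x))"
proof -
  let ?C = "X \<union> Y" and ?D = "X \<inter> Y"
  have finC: "finite ?C" using fin by simp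
  have "(\<Sum>x\<in>?C. hpow (fU x) + (if x \<in> ?D then hpow (fI x) else hpow_step (fU x)))
      \<le> (\<Sum>x\<in>?C. (if x \<in> X then hpow ((if x \<in> Y then 0 else 1) + fX x) else 0)
                 + (if x \<in> Y then hpow ((if x \<in> X then 0 else 1) + fY x) else 0))"
  proof (rule sum_mono)
    fix x assume x: "x \<in> ?C"
    note d = deg[OF x]
    consider "x \<in> ?D" | "x \<in> X" "x \<notin> Y" | "x \<in> Y" "x \<notin> X" using x by blast
    thus "hpow (fU x) + (if x \<in> ?D then hpow (fI x) else hpow_step (fU x))
      \<le> (if x \<in> X then hpow ((if x \<in> Y then 0 else 1) + fX x) else 0)
        + (if x \<in> Y then hpow ((if x \<in> X then 0 else 1) + fY x) else 0)"
    proof cases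
      case 1
      thus ?thesis using hpow_add_le[of "fU x" "fX x" "fY x" "fI x"] d by (simp add: add.commute)
    next
      case 2
      thus ?thesis using hpow_mono[of "Suc (fU x)" "Suc (fX x)"] d by (simp add: hpow_Suc)
    next
      case 3
      thus ?thesis using hpow_mono[of "Suc (fU x)" "Suc (fY x)"] d by (simp add: hpow_Suc)
    qed
  qed
  also have "\<dots> = (\<Sum>x\<in>X. hpow ((if x \<in> Y then 0 else 1) + fX x)) + (\<Sum>x\<in>Y. hpow ((if x \<in> X then 0 else 1) + fY x))"
    using finC by (simp add: sum.distrib sum.inter_restrict[symmetric] Int_absorb1 del: finite_Un)
  also have "(\<Sum>x\<in>?C. hpow (fU x) + (if x \<in> ?D then hpow (fI x) else hpow_step (fU x)))
      = (\<Sum>x\<in>?C. hpow (fU x)) + (\<Sum>x\<in>?D. hpow (fI x)) + (\<Sum>x\<in>?C - ?D. hpow_step (fU x))"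
  proof -
    have "?C \<inter> {x. x \<in> ?D} = ?D" "?C \<inter> - {x. x \<in> ?D} = ?C - ?D" by auto
    thus ?thesis using sum.If_cases[OF finC, of "\<lambda>x. x \<in> ?D" "\<lambda>x. hpow (fI x)" "\<lambda>x. hpow_step (fU x)"]
      by (simp add: sum.distrib add.assoc)
  qed
  finally show ?thesis .
qed

theorem sum_hpow_hfun_ge:
  "A \<subseteq> cube n \<Longrightarrow> 2 * real (card A) * (2 ^ n - real (card A)) / 2 ^ n \<le> (\<Sum>x\<in>A. hpow (hfun n A x))"
proof (induction n arbitrary: A)
  case 0
  have "card A \<le> card (cube 0)" using 0 finite_cube by (intro card_mono)
  hence "card A = 0 \<or> card A = 1" by (auto simp: card_cube)
  thus ?case using sum_nonneg[of A "\<lambda>x. hpow (hfun 0 A x)"] hpow_nonneg by auto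
next
  case (Suc n A)
  define A0 where "A0 = cube_slice False A"
  define A1 where "A1 = cube_slice True A"
  define C where "C = A0 \<union> A1"
  define D where "D = A0 \<inter> A1"
  define dg where "dg X x = deg_in (cube n - X) x" for X x
  have sub: "A0 \<subseteq> cube n" "A1 \<subseteq> cube n"
    using cube_slice_subset[OF Suc.prems] by (auto simp: A0_def A1_def)
  hence fin: "finite A0" "finite A1" "finite C"
    using finite_subset[OF _ finite_cube] by (auto simp: C_def)
  have subCD: "C \<subseteq> cube n" "D \<subseteq> cube n" using sub by (auto simp: C_def D_def)
  have IH: "2 * real (card X) * (2 ^ n - real (card X)) / 2 ^ n \<le> (\<Sum>x\<in>X. hpow (dg X x))"
    if "X \<subseteq> cube n" for X
    using Suc.IH[OF that] by (simp add: hfun_def dg_def cong: sum.cong)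
  have cardA: "card A = card C + card D"
    using card_cube_Suc[OF Suc.prems] card_Un_Int[OF fin(1,2)] by (simp add: A0_def A1_def C_def D_def)
  have "card C \<le> 2 ^ n" using card_mono[OF finite_cube subCD(1)] by (simp add: card_cube)
  hence "2 * real (card C + card D) * (2 * 2 ^ n - real (card C + card D)) / (2 * 2 ^ n)
      \<le> (\<Sum>x\<in>C. hpow (dg C x)) + (\<Sum>x\<in>D. hpow (dg D x)) + (\<Sum>x\<in>C - D. hpow_step (dg C x))"
    using IH[OF subCD(1)] IH[OF subCD(2)]
    by (intro hpow_recursion_step[OF fin(3)]) (auto simp: C_def D_def)
  also have "\<dots> \<le> (\<Sum>x\<in>A0. hpow ((if x \<in> A1 then 0 else 1) + dg A0 x))
      + (\<Sum>x\<in>A1. hpow ((if x \<in> A0 then 0 else 1) + dg A1 x))"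
    unfolding C_def D_def dg_def
    using deg_in_compl_Un_Int[of n A0 A1] finite_cube
    by (intro sum_hpow_two_slices[OF fin(1,2)]) (auto intro: deg_in_mono)
  also have "\<dots> = (\<Sum>z\<in>A. hpow (hfun (Suc n) A z))"
    using sum_hpow_hfun_Suc[OF Suc.prems] by (simp add: A0_def A1_def dg_def)
  finally show ?case using cardA by simp
qed

lemma hfun_le_dim: "x \<in> cube n \<Longrightarrow> hfun n A x \<le> n"
  using deg_in_le_dim[of "cube n - A" n x] by (simp add: hfun_def)

lemma sum_hpow_hfun_Diff_ge:
  assumes A: "A \<subseteq> cube n" and U: "U \<subseteq> A"
  shows "2 * real (card A) * (2 ^ n - real (card A)) / 2 ^ n - real (card U) * hpow n
    \<le> (\<Sum>x\<in>A - U. hpow (hfun n A x))"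
proof -
  have finA: "finite A" using A finite_cube finite_subset by blast
  have "(\<Sum>x\<in>U. hpow (hfun n A x)) \<le> (\<Sum>x\<in>U. hpow n)"
    using A U by (intro sum_mono hpow_mono hfun_le_dim) auto
  moreover have "(\<Sum>x\<in>A. hpow (hfun n A x)) = (\<Sum>x\<in>A - U. hpow (hfun n A x)) + (\<Sum>x\<in>U. hpow (hfun n A x))"
    using sum.subset_diff[OF U finA] .
  ultimately show ?thesis using sum_hpow_hfun_ge[OF A] by simp
qed

lemma cube_int_eq_sum: "cube_int n X F = (\<Sum>x\<in>X. F x) / 2 ^ n"
  by (simp add: cube_int_def mu_def sum_divide_distrib)

theorem corollary3p2:
  fixes n :: nat and R S U :: "bool list set" and \<alpha> \<beta> :: real
  assumes "n \<ge> 1"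
    and "\<beta> = log 2 (3/2)"
    and "R \<union> S \<union> U = cube n"
    and "R \<inter> S = {}" and "R \<inter> U = {}" and "S \<inter> U = {}"
    and "mu n (R \<union> U) = \<alpha>"
  shows "real (card (nabla R S)) / 2 ^ n = cube_int n R (\<lambda>x. real (hfun n (R \<union> U) x))
    \<and> cube_int n R (\<lambda>x. real (hfun n (R \<union> U) x)) \<ge> cube_int n R (\<lambda>x. real (hfun n (R \<union> U) x) powr \<beta>)
    \<and> cube_int n R (\<lambda>x. real (hfun n (R \<union> U) x) powr \<beta>) \<ge> 2 * \<alpha> * (1 - \<alpha>) - real n powr \<beta> * mu n U"
proof -
  have powr_\<beta>: "real h powr \<beta> = hpow h" for h using assms(2) by (simp add: hpow_def cube_exponent_def)
  have A: "R \<union> U \<subseteq> cube n" using assms(3) by auto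
  hence finR: "finite R" using finite_cube finite_subset by blast
  have "cube n - (R \<union> U) = S" using assms(3-6) by auto
  hence "card (nabla R S) = (\<Sum>x\<in>R. hfun n (R \<union> U) x)"
    by (simp add: card_nabla[OF finR] hfun_def)
  moreover have "(\<Sum>x\<in>R. hpow (hfun n (R \<union> U) x)) \<le> (\<Sum>x\<in>R. real (hfun n (R \<union> U) x))"
    by (intro sum_mono hpow_le_self)
  moreover have "2 * \<alpha> * (1 - \<alpha>) - real n powr \<beta> * mu n U
      = (2 * real (card (R \<union> U)) * (2 ^ n - real (card (R \<union> U))) / 2 ^ n - real (card U) * hpow n) / 2 ^ n"
    using assms(7) by (simp add: mu_def powr_\<beta> field_simps)
  moreover have "R \<union> U - U = R" using assms(5) by auto
  ultimately show ?thesis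
    using divide_right_mono[OF sum_hpow_hfun_Diff_ge[OF A, of U], of "2 ^ n"]
    by (auto simp: cube_int_eq_sum powr_\<beta> divide_right_mono)
qed

end
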